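(* Let $\beta\in\Phi_+$, $i\in I$ and $w\in W^v$ with $w^{-1}(\alpha_i)=\alpha_i$. If $\beta$, $r_i(\beta)$ and $w(\beta)$ are all quantum roots, then $r_iw(\beta)$ is a quantum root, and $r_iw(\beta^\vee)=w(\beta^\vee)+r_i(\beta^\vee)-\beta^\vee$.
   Context: Kac–Moody root datum $(A,X,Y,(\alpha_i)_{i\in I},(\alpha_i^\vee)_{i\in I})$, generalized Cartan matrix $A$ with $\langle\alpha_i^\vee,\alpha_j\rangle=a_{i,j}$, simple reflections $r_i(x)=x-\langle\alpha_i^\vee,x\rangle\alpha_i$, $r_i(y)=y-\langle y,\alpha_i\rangle\alpha_i^\vee$, $W^v=\langle r_i\rangle$, $\Phi=W^v\{\alpha_i\}$, $\Phi_+=\Phi\cap\bigoplus\mathbb Z_{\ge0}\alpha_i$; coroot $\beta^\vee=w(\alpha_i^\vee)$ and $s_\beta=wr_iw^{-1}$ for $\beta=w(\alpha_i)$. $\mathrm{Inv}(w)=\{\alpha\in\Phi_+\mid w\alpha\in\Phi_-\}$; $\beta\in\Phi_+$ is quantum if $\langle\beta^\vee,\gamma\rangle=1$ for all $\gamma\in\mathrm{Inv}(s_\beta)\setminus\{\beta\}$ (in particular quantum roots are positive). *)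

theory Defs
  imports Main
begin

(* Root lattice Q = \<Oplus>_i Z alpha_i and coroot lattice
   Q^v = \<Oplus>_i Z alpha_i^v are both modelled as 'i \<Rightarrow> int (coordinates in the simple
   (co)roots).  A is the generalized Cartan matrix, A i j = <alpha_i^v, alpha_j>. *)

definition gcm :: "('i::finite \<Rightarrow> 'i \<Rightarrow> int) \<Rightarrow> bool" where
  "gcm A \<longleftrightarrow> (\<forall>i. A i i = 2) \<and> (\<forall>i j. i \<noteq> j \<longrightarrow> A i j \<le> 0)
           \<and> (\<forall>i j. A i j = 0 \<longleftrightarrow> A j i = 0)"

(* simple root alpha_i (in Q) and simple coroot alpha_i^v (in Q^v) *)
definition sroot :: "'i \<Rightarrow> 'i \<Rightarrow> int" where
  "sroot i = (\<lambda>j. if j = i then 1 else 0)"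

(* pairing <y, x> for y in Q^v, x in Q *)
definition pair :: "('i::finite \<Rightarrow> 'i \<Rightarrow> int) \<Rightarrow> ('i \<Rightarrow> int) \<Rightarrow> ('i \<Rightarrow> int) \<Rightarrow> int" where
  "pair A y x = (\<Sum>j\<in>UNIV. \<Sum>k\<in>UNIV. y j * A j k * x k)"

definition sr :: "('i::finite \<Rightarrow> 'i \<Rightarrow> int) \<Rightarrow> 'i \<Rightarrow> ('i \<Rightarrow> int) \<Rightarrow> ('i \<Rightarrow> int)" where
  "sr A i x = (\<lambda>j. x j - pair A (sroot i) x * sroot i j)"

definition srv :: "('i::finite \<Rightarrow> 'i \<Rightarrow> int) \<Rightarrow> 'i \<Rightarrow> ('i \<Rightarrow> int) \<Rightarrow> ('i \<Rightarrow> int)" where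
  "srv A i y = (\<lambda>j. y j - pair A y (sroot i) * sroot i j)"

(* An element of W^v is represented by a word [i1,...,ik], acting as r_i1 \<circ> ... \<circ> r_ik *)
definition act :: "('i::finite \<Rightarrow> 'i \<Rightarrow> int) \<Rightarrow> 'i list \<Rightarrow> ('i \<Rightarrow> int) \<Rightarrow> ('i \<Rightarrow> int)" where
  "act A ws x = foldr (sr A) ws x"

definition actv :: "('i::finite \<Rightarrow> 'i \<Rightarrow> int) \<Rightarrow> 'i list \<Rightarrow> ('i \<Rightarrow> int) \<Rightarrow> ('i \<Rightarrow> int)" where
  "actv A ws y = foldr (srv A) ws y"

definition roots :: "('i::finite \<Rightarrow> 'i \<Rightarrow> int) \<Rightarrow> ('i \<Rightarrow> int) set" where
  "roots A = {act A ws (sroot i) | ws i. True}"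

definition pos_roots :: "('i::finite \<Rightarrow> 'i \<Rightarrow> int) \<Rightarrow> ('i \<Rightarrow> int) set" where
  "pos_roots A = {b \<in> roots A. \<forall>j. 0 \<le> b j}"

definition neg_roots :: "('i::finite \<Rightarrow> 'i \<Rightarrow> int) \<Rightarrow> ('i \<Rightarrow> int) set" where
  "neg_roots A = {b \<in> roots A. \<forall>j. b j \<le> 0}"

definition coroot :: "('i::finite \<Rightarrow> 'i \<Rightarrow> int) \<Rightarrow> ('i \<Rightarrow> int) \<Rightarrow> ('i \<Rightarrow> int)" where
  "coroot A b = (SOME y. \<exists>ws i. b = act A ws (sroot i) \<and> y = actv A ws (sroot i))"

(* s_beta = w r_i w^{-1} (as a map on Q) for beta = w(alpha_i); w^{-1} is the reversed word *)
definition refl :: "('i::finite \<Rightarrow> 'i \<Rightarrow> int) \<Rightarrow> ('i \<Rightarrow> int) \<Rightarrow> (('i \<Rightarrow> int) \<Rightarrow> ('i \<Rightarrow> int))" where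
  "refl A b = (SOME f. \<exists>ws i. b = act A ws (sroot i)
                  \<and> f = (\<lambda>x. act A ws (sr A i (act A (rev ws) x))))"

(* Inv(w) = {alpha in Phi_+ | w alpha in Phi_-}, w given as its action on Q *)
definition Inv :: "('i::finite \<Rightarrow> 'i \<Rightarrow> int) \<Rightarrow> (('i \<Rightarrow> int) \<Rightarrow> ('i \<Rightarrow> int)) \<Rightarrow> ('i \<Rightarrow> int) set" where
  "Inv A f = {a \<in> pos_roots A. f a \<in> neg_roots A}"

definition quantum :: "('i::finite \<Rightarrow> 'i \<Rightarrow> int) \<Rightarrow> ('i \<Rightarrow> int) \<Rightarrow> bool" where
  "quantum A b \<longleftrightarrow> b \<in> pos_roots A \<and>
     (\<forall>g \<in> Inv A (refl A b) - {b}. pair A (coroot A b) g = 1)"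

end

theory Submission
  imports Defs
begin

text \<open>
  Write \<open>c = \<langle>\<beta>\<^sup>\<or>, \<alpha>\<^sub>i\<rangle>\<close>; since \<open>w\<^sup>-\<^sup>1(\<alpha>\<^sub>i) = \<alpha>\<^sub>i\<close>, also \<open>c = \<langle>w(\<beta>\<^sup>\<or>), \<alpha>\<^sub>i\<rangle>\<close>,
  which gives the coroot identity at once. If \<open>c < -1\<close>, then \<open>\<alpha>\<^sub>i\<close> would be an inversion of
  \<open>s\<^bsub>r\<^sub>i\<beta>\<^esub>\<close> pairing to \<open>-c \<noteq> 1\<close> with the coroot of \<open>r\<^sub>i\<beta>\<close>; so \<open>c \<ge> -1\<close>. Put \<open>\<gamma> = w(\<beta>)\<close> and
  \<open>\<delta> = r\<^sub>i\<gamma>\<close>, so \<open>s\<^sub>\<delta> = r\<^sub>i s\<^sub>\<gamma> r\<^sub>i\<close>. An inversion \<open>x \<noteq> \<delta>\<close> of \<open>s\<^sub>\<delta>\<close> is either \<open>\<alpha>\<^sub>i\<close>, or \<open>r\<^sub>i x\<close> is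
  an inversion of \<open>s\<^sub>\<gamma>\<close>, or \<open>s\<^sub>\<delta>(x) = -\<alpha>\<^sub>i\<close>; in the first and last case the bound \<open>c \<ge> -1\<close>
  forces the pairing to be 1, in the middle case quantumness of \<open>\<gamma>\<close> does.

  Underneath lies the basic theory of the Weyl group, needed because coroots and reflections
  are defined through a chosen word: every root is positive or negative, and \<open>w(\<alpha>\<^sub>i) = \<alpha>\<^sub>j\<close>
  implies \<open>w(\<alpha>\<^sub>i\<^sup>\<or>) = \<alpha>\<^sub>j\<^sup>\<or>\<close>. Both follow from one sign theorem for \<open>W\<close> acting on \<open>Q\<close> and
  \<open>Q\<^sup>\<or>\<close> simultaneously: if \<open>\<ell>(w r\<^sub>s) \<ge> \<ell>(w)\<close>, then \<open>w(\<alpha>\<^sub>s)\<close> and \<open>w(\<alpha>\<^sub>s\<^sup>\<or>)\<close> are both \<open>\<ge> 0\<close>.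
  Its proof is the classical one (Humphreys, Reflection Groups and Coxeter Groups, 5.4):
  factor \<open>w = v v\<^sub>I\<close> with \<open>v\<^sub>I\<close> in a dihedral subgroup \<open>\<langle>r\<^sub>s, r\<^sub>t\<rangle>\<close> and \<open>v\<close> of minimal length,
  and settle the rank two case by explicit computation, using the braid relations when
  \<open>a\<^sub>s\<^sub>t a\<^sub>t\<^sub>s < 4\<close>. The coroot lattice is handled as the root lattice of the transposed matrix.
\<close>

section \<open>Simple reflections\<close>

definition dual_cartan :: "('i \<Rightarrow> 'i \<Rightarrow> int) \<Rightarrow> 'i \<Rightarrow> 'i \<Rightarrow> int" where
  "dual_cartan A = (\<lambda>i j. A j i)"

lemma gcm_diag: "gcm A \<Longrightarrow> A i i = 2"
  unfolding gcm_def by blast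

lemma gcm_dual_cartan: "gcm A \<Longrightarrow> gcm (dual_cartan A)"
  unfolding gcm_def dual_cartan_def by auto

lemma pair_dual_cartan: "pair (dual_cartan A) x y = pair A y x"
  unfolding pair_def dual_cartan_def by (subst sum.swap) (simp add: algebra_simps)

lemma srv_eq_sr_dual_cartan: "srv A = sr (dual_cartan A)"
  unfolding srv_def sr_def by (simp add: pair_dual_cartan)

lemma actv_eq_act_dual_cartan: "actv A = act (dual_cartan A)"
  unfolding actv_def act_def srv_eq_sr_dual_cartan ..

lemma pair_lincomb_right:
  "pair A y (\<lambda>j. p * x j + q * z j) = p * pair A y x + q * pair A y z"
  unfolding pair_def by (simp add: algebra_simps sum.distrib sum_distrib_left)

lemma pair_uminus_right: "pair A y (\<lambda>j. - x j) = - pair A y x"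
  using pair_lincomb_right[of A y "-1" x 0 x] by simp

lemma pair_sroot_sroot: "pair A (sroot i) (sroot j) = A i j"
  unfolding pair_def sroot_def
  by (simp add: if_distrib[of "\<lambda>x. _ * x"] if_distrib[of "\<lambda>x. x * _"] sum.delta cong: if_cong)

lemma sr_lincomb: "sr A i (\<lambda>j. p * x j + q * z j) = (\<lambda>j. p * sr A i x j + q * sr A i z j)"
  by (simp add: sr_def pair_lincomb_right algebra_simps)

lemma sr_apply_other: "j \<noteq> i \<Longrightarrow> sr A i x j = x j"
  by (simp add: sr_def sroot_def)

lemma sr_sroot_self: "gcm A \<Longrightarrow> sr A i (sroot i) = (\<lambda>j. - sroot i j)"
  by (simp add: sr_def pair_sroot_sroot gcm_diag)

lemma pair_sr_right: "pair A y (sr A i x) = pair A y x - pair A (sroot i) x * pair A y (sroot i)"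
proof -
  have "sr A i x = (\<lambda>j. 1 * x j + (- pair A (sroot i) x) * sroot i j)"
    unfolding sr_def by simp
  then show ?thesis by (simp only: pair_lincomb_right)
qed

lemma pair_srv_left: "pair A (srv A i y) x = pair A y (sr A i x)"
proof -
  have "pair A (srv A i y) x = pair (dual_cartan A) x (sr (dual_cartan A) i y)"
    by (simp add: srv_eq_sr_dual_cartan pair_dual_cartan)
  then show ?thesis
    by (simp add: pair_sr_right pair_dual_cartan)
qed

lemma sr_sr:
  assumes "gcm A" shows "sr A i (sr A i x) = x"
proof -
  have "A i i = 2" using assms by (rule gcm_diag)
  then show ?thesis
    by (simp add: sr_def[of A i "sr A i x"] pair_sr_right pair_sroot_sroot) (simp add: sr_def)
qed

lemma act_Nil [simp]: "act A [] x = x"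
  by (simp add: act_def)

lemma act_Cons [simp]: "act A (c # ws) x = sr A c (act A ws x)"
  by (simp add: act_def)

lemma act_append: "act A (xs @ ys) x = act A xs (act A ys x)"
  by (simp add: act_def)

lemma act_lincomb:
  "act A ws (\<lambda>j. p * x j + q * z j) = (\<lambda>j. p * act A ws x j + q * act A ws z j)"
  by (induction ws) (simp_all add: sr_lincomb)

lemma act_uminus: "act A ws (\<lambda>j. - x j) = (\<lambda>j. - act A ws x j)"
  using act_lincomb[of A ws "-1" x 0 x] by simp

lemma act_zero: "act A ws (\<lambda>_. 0) = (\<lambda>_. 0)"
  using act_lincomb[of A ws 0 "\<lambda>_. 0" 0 "\<lambda>_. 0"] by simp

lemma act_rev_act: "gcm A \<Longrightarrow> act A (rev ws) (act A ws x) = x"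
  by (induction ws arbitrary: x) (simp_all add: act_append sr_sr)

lemma act_act_rev: "gcm A \<Longrightarrow> act A ws (act A (rev ws) x) = x"
  using act_rev_act[of A "rev ws"] by simp

lemma act_snoc_sroot: "gcm A \<Longrightarrow> act A (ws @ [i]) (sroot i) = (\<lambda>j. - act A ws (sroot i) j)"
  by (simp add: act_append sr_sroot_self act_uminus)

lemma actv_Nil [simp]: "actv A [] y = y"
  by (simp add: actv_def)

lemma actv_Cons [simp]: "actv A (c # ws) y = srv A c (actv A ws y)"
  by (simp add: actv_def)

lemma actv_append: "actv A (xs @ ys) y = actv A xs (actv A ys y)"
  by (simp add: actv_def)

lemma pair_actv_left: "pair A (actv A ws y) x = pair A y (act A (rev ws) x)"
  by (induction ws arbitrary: x) (simp_all add: actv_def pair_srv_left act_append)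

lemma actv_snoc_sroot: "gcm A \<Longrightarrow> actv A (ws @ [i]) (sroot i) = (\<lambda>j. - actv A ws (sroot i) j)"
  unfolding actv_eq_act_dual_cartan by (rule act_snoc_sroot[OF gcm_dual_cartan])

section \<open>Length in the Weyl group\<close>

type_synonym 'i endo_pair = "(('i \<Rightarrow> int) \<Rightarrow> 'i \<Rightarrow> int) \<times> (('i \<Rightarrow> int) \<Rightarrow> 'i \<Rightarrow> int)"

text \<open>An element of \<open>W\<^sup>v\<close> is identified with its pair of actions on \<open>Q\<close> and \<open>Q\<^sup>\<or>\<close>; lengths are
  measured in this group, so that the sign theorem holds for roots and coroots together.\<close>

definition weyl_elem :: "('i::finite \<Rightarrow> 'i \<Rightarrow> int) \<Rightarrow> 'i list \<Rightarrow> 'i endo_pair" where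
  "weyl_elem A ws = (act A ws, actv A ws)"

lemma weyl_elem_eq_act:
  "weyl_elem A u = weyl_elem A v \<Longrightarrow> act A u x = act A v x \<and> actv A u x = actv A v x"
  unfolding weyl_elem_def by simp

lemma weyl_elem_append_cong:
  "weyl_elem A xs = weyl_elem A xs' \<Longrightarrow> weyl_elem A ys = weyl_elem A ys'
    \<Longrightarrow> weyl_elem A (xs @ ys) = weyl_elem A (xs' @ ys')"
  unfolding weyl_elem_def by (simp add: act_append[abs_def] actv_append[abs_def])

lemma weyl_elem_cancel: "gcm A \<Longrightarrow> weyl_elem A (xs @ [c, c] @ ys) = weyl_elem A (xs @ ys)"
  unfolding weyl_elem_def
  by (simp add: act_append actv_append sr_sr srv_eq_sr_dual_cartan gcm_dual_cartan fun_eq_iff)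

lemma weyl_elem_cancel_snoc: "gcm A \<Longrightarrow> weyl_elem A (xs @ [c, c]) = weyl_elem A xs"
  using weyl_elem_cancel[of A xs c "[]"] by simp

definition word_length :: "('i::finite \<Rightarrow> 'i \<Rightarrow> int) \<Rightarrow> 'i set \<Rightarrow> 'i list \<Rightarrow> nat" where
  "word_length A S ws = (LEAST n. \<exists>u. set u \<subseteq> S \<and> length u = n \<and> weyl_elem A u = weyl_elem A ws)"

lemma word_length_cong: "weyl_elem A u = weyl_elem A v \<Longrightarrow> word_length A S u = word_length A S v"
  unfolding word_length_def by simp

lemma word_length_le: "set ws \<subseteq> S \<Longrightarrow> word_length A S ws \<le> length ws"
  unfolding word_length_def by (rule Least_le) blast

lemma reduced_word_exists:
  assumes "set ws \<subseteq> S"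
  obtains u where "set u \<subseteq> S" "length u = word_length A S ws"
    "weyl_elem A u = weyl_elem A ws"
proof -
  have "\<exists>u. set u \<subseteq> S \<and> length u = word_length A S ws \<and> weyl_elem A u = weyl_elem A ws"
    unfolding word_length_def by (rule LeastI_ex) (use assms in blast)
  then show ?thesis using that by blast
qed

lemma word_length_mono:
  assumes "set ws \<subseteq> S" "S \<subseteq> T"
  shows "word_length A T ws \<le> word_length A S ws"
proof -
  obtain u where "set u \<subseteq> S" "length u = word_length A S ws"
    "weyl_elem A u = weyl_elem A ws"
    using reduced_word_exists[OF assms(1)] .
  with assms(2) word_length_le[of u T A] word_length_cong[of A u ws T] show ?thesis by auto
qed

lemma word_length_append:
  assumes "set xs \<subseteq> S" "set ys \<subseteq> S"
  shows "word_length A S (xs @ ys)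
    \<le> word_length A S xs + word_length A S ys"
proof -
  obtain xs' where xs': "set xs' \<subseteq> S" "length xs' = word_length A S xs"
    "weyl_elem A xs' = weyl_elem A xs"
    using reduced_word_exists[OF assms(1)] .
  obtain ys' where ys': "set ys' \<subseteq> S" "length ys' = word_length A S ys"
    "weyl_elem A ys' = weyl_elem A ys"
    using reduced_word_exists[OF assms(2)] .
  have "weyl_elem A (xs @ ys) = weyl_elem A (xs' @ ys')"
    using weyl_elem_append_cong xs'(3) ys'(3) by metis
  with word_length_le[of "xs' @ ys'" S A] xs' ys' show ?thesis
    using word_length_cong[of A "xs @ ys" "xs' @ ys'" S] by simp
qed

lemma word_length_Cons:
  "c \<in> S \<Longrightarrow> set ws \<subseteq> S
    \<Longrightarrow> word_length A S (c # ws) \<le> word_length A S ws + 1"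
  using word_length_append[of "[c]" S ws A] word_length_le[of "[c]" S A] by simp

section \<open>Rank two\<close>

fun alt :: "'i \<Rightarrow> 'i \<Rightarrow> nat \<Rightarrow> 'i list" where
  "alt s t 0 = []"
| "alt s t (Suc k) = (if even k then t else s) # alt s t k"

lemma length_alt [simp]: "length (alt s t k) = k"
  by (induction k) auto

lemma set_alt: "set (alt s t k) \<subseteq> {s, t}"
  by (induction k) auto

lemma drop_alt: "drop j (alt s t (j + k)) = alt s t k"
  by (induction j) (auto simp: drop_Suc)

lemma alt_numeral:
  "alt s t (numeral n) = (if even (pred_numeral n) then t else s) # alt s t (pred_numeral n)"
  by (simp add: numeral_eq_Suc)

lemma alt_eq_Nil_iff [simp]: "alt s t k = [] \<longleftrightarrow> k = 0"
  by (cases k) auto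

lemma last_alt: "0 < k \<Longrightarrow> last (alt s t k) = t"
  by (induction k) auto

lemma alternating_eq_alt:
  assumes "set u \<subseteq> {s, t}" "s \<noteq> t" "\<And>xs ys c. u \<noteq> xs @ [c, c] @ ys"
    and "u = [] \<or> last u \<noteq> s"
  shows "u = alt s t (length u)"
  using assms
proof (induction u)
  case Nil
  then show ?case by simp
next
  case (Cons c u)
  have no_repeat: "u \<noteq> xs @ [d, d] @ ys" for xs ys d
    using Cons.prems(3)[of "c # xs" d ys] by auto
  show ?case
  proof (cases u)
    case Nil
    then show ?thesis using Cons.prems by auto
  next
    case (Cons d u')
    have u: "u = alt s t (length u)"
      using Cons.IH[OF _ \<open>s \<noteq> t\<close> no_repeat] Cons.prems(1,4) \<open>u = d # u'\<close> by auto
    have "c \<noteq> d"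
      using Cons.prems(3)[of "[]" d u'] \<open>u = d # u'\<close> by auto
    moreover have "d = (if even (length u') then t else s)"
      using u \<open>u = d # u'\<close> by simp
    ultimately have "c = (if even (length u) then t else s)"
      using Cons.prems(1,2) \<open>u = d # u'\<close> by auto
    then show ?thesis by (subst u) simp
  qed
qed

definition lincomb2 :: "'i \<Rightarrow> 'i \<Rightarrow> int \<Rightarrow> int \<Rightarrow> 'i \<Rightarrow> int" where
  "lincomb2 s t p q = (\<lambda>j. p * sroot s j + q * sroot t j)"

lemma sr_lincomb2_fst:
  "gcm A \<Longrightarrow> sr A s (lincomb2 s t p q) = lincomb2 s t (- A s t * q - p) q"
  unfolding lincomb2_def sr_def by (drule gcm_diag[of _ s]) (simp add: pair_lincomb_right pair_sroot_sroot algebra_simps)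

lemma sr_lincomb2_snd:
  "gcm A \<Longrightarrow> sr A t (lincomb2 s t p q) = lincomb2 s t p (- A t s * p - q)"
  unfolding lincomb2_def sr_def by (drule gcm_diag[of _ t]) (simp add: pair_lincomb_right pair_sroot_sroot algebra_simps)

definition nonneg_lincomb2 :: "'i \<Rightarrow> 'i \<Rightarrow> ('i \<Rightarrow> int) \<Rightarrow> bool" where
  "nonneg_lincomb2 s t x \<longleftrightarrow> (\<exists>p q. 0 \<le> p \<and> 0 \<le> q \<and> x = lincomb2 s t p q)"

lemma nonneg_lincomb2I [simp]: "0 \<le> p \<Longrightarrow> 0 \<le> q \<Longrightarrow> nonneg_lincomb2 s t (lincomb2 s t p q)"
  unfolding nonneg_lincomb2_def by blast

lemma sroot_eq_lincomb2: "sroot s = lincomb2 s t 1 0"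
  by (simp add: lincomb2_def)

lemma act_alt_sroot_nonneg_infinite:
  assumes "gcm A" "s \<noteq> t" "4 \<le> A s t * A t s"
  shows "nonneg_lincomb2 s t (act A (alt s t k) (sroot s))"
proof -
  define X where "X = - A s t"
  define Y where "Y = - A t s"
  have XY: "0 \<le> X" "0 \<le> Y" "4 \<le> X * Y"
    using assms unfolding X_def Y_def gcm_def by auto
  \<comment> \<open>the coefficient changed last stays at least half the other one times its Cartan entry\<close>
  have "\<exists>p q. 0 \<le> p \<and> 0 \<le> q \<and> (if even k then 2 * q \<le> Y * p else 2 * p \<le> X * q)
      \<and> act A (alt s t k) (sroot s) = lincomb2 s t p q"
  proof (induction k)
    case 0
    show ?case by (rule exI[of _ 1], rule exI[of _ 0]) (simp add: sroot_eq_lincomb2[of s t] XY)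
  next
    case (Suc k)
    then obtain p q where pq: "0 \<le> p" "0 \<le> q"
      "if even k then 2 * q \<le> Y * p else 2 * p \<le> X * q"
      "act A (alt s t k) (sroot s) = lincomb2 s t p q" by blast
    show ?case
    proof (cases "even k")
      case True
      have "4 * p \<le> X * Y * p" using XY pq by (simp add: mult_right_mono)
      moreover have "X * (2 * q) \<le> X * (Y * p)" using XY pq True by (simp add: mult_left_mono)
      ultimately have "2 * p \<le> X * (Y * p - q)" by (simp add: algebra_simps)
      moreover have "0 \<le> Y * p - q" using XY pq True by (simp add: mult_nonneg_nonneg)
      moreover have "act A (alt s t (Suc k)) (sroot s) = lincomb2 s t p (Y * p - q)"
        using True pq(4) assms(1) by (simp add: sr_lincomb2_snd Y_def)
      ultimately show ?thesis
        using True pq(1) by (intro exI[of _ p] exI[of _ "Y * p - q"]) simp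
    next
      case False
      have "4 * q \<le> X * Y * q" using XY pq by (simp add: mult_right_mono)
      moreover have "Y * (2 * p) \<le> Y * (X * q)" using XY pq False by (simp add: mult_left_mono)
      ultimately have "2 * q \<le> Y * (X * q - p)" by (simp add: algebra_simps)
      moreover have "0 \<le> X * q - p" using XY pq False by (simp add: mult_nonneg_nonneg)
      moreover have "act A (alt s t (Suc k)) (sroot s) = lincomb2 s t (X * q - p) q"
        using False pq(4) assms(1) by (simp add: sr_lincomb2_fst X_def)
      ultimately show ?thesis
        using False pq(2) by (intro exI[of _ "X * q - p"] exI[of _ q]) simp
    qed
  qed
  then show ?thesis unfolding nonneg_lincomb2_def by blast
qed

text \<open>The order of \<open>r\<^sub>s r\<^sub>t\<close>; meaningful only when \<open>a\<^sub>s\<^sub>t a\<^sub>t\<^sub>s < 4\<close>.\<close>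

definition braid_length :: "('i \<Rightarrow> 'i \<Rightarrow> int) \<Rightarrow> 'i \<Rightarrow> 'i \<Rightarrow> nat" where
  "braid_length A s t = (if A s t * A t s = 0 then 2 else if A s t * A t s = 1 then 3
     else if A s t * A t s = 2 then 4 else 6)"

lemma gcm_finite_rank2_cases:
  assumes "gcm A" "s \<noteq> t" "A s t * A t s < 4"
  shows "(A s t, A t s) \<in> {(0, 0), (-1, -1), (-1, -2), (-2, -1), (-1, -3), (-3, -1)}"
proof (cases "A s t = 0")
  case True
  then show ?thesis using assms(1) unfolding gcm_def by auto
next
  case False
  moreover have "A t s \<noteq> 0" "A s t \<le> 0" "A t s \<le> 0"
    using False assms(1,2) unfolding gcm_def by auto
  ultimately have "A s t \<le> -1" "A t s \<le> -1" by auto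
  moreover from this have "- A s t \<le> A s t * A t s" "- A t s \<le> A s t * A t s"
    using mult_right_mono[of 1 "- A t s" "- A s t"] mult_right_mono[of 1 "- A s t" "- A t s"]
    by (simp_all add: mult.commute)
  ultimately have "A s t \<in> {-1, -2, -3}" "A t s \<in> {-1, -2, -3}"
    using assms(3) by auto
  then show ?thesis using assms(3) by auto
qed

lemma act_alt_sroot_nonneg_finite:
  assumes "gcm A" "s \<noteq> t" "A s t * A t s < 4" "k < braid_length A s t"
  shows "nonneg_lincomb2 s t (act A (alt s t k) (sroot s))"
proof -
  have "k < 6" using assms(4) by (simp add: braid_length_def split: if_splits)
  then have "k \<in> {0, 1, 2, 3, 4, 5}" by auto
  then show ?thesis
    using gcm_finite_rank2_cases[OF assms(1-3)] assms(1,4)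
    by (auto simp: braid_length_def alt_numeral sroot_eq_lincomb2[of s t]
        sr_lincomb2_fst sr_lincomb2_snd)
qed

definition offset :: "'i \<Rightarrow> 'i \<Rightarrow> ('i \<Rightarrow> int) \<Rightarrow> int \<Rightarrow> int \<Rightarrow> 'i \<Rightarrow> int" where
  "offset s t x c d = (\<lambda>j. x j + c * sroot s j + d * sroot t j)"

lemma offset_zero: "offset s t x 0 0 = x"
  by (simp add: offset_def)

lemma pair_offset_right:
  "pair A y (offset s t x c d) = pair A y x + c * pair A y (sroot s) + d * pair A y (sroot t)"
  unfolding offset_def pair_def by (simp add: algebra_simps sum.distrib sum_distrib_left)

lemma sr_offset_fst:
  "gcm A \<Longrightarrow> sr A s (offset s t x c d) = offset s t x (- pair A (sroot s) x - c - A s t * d) d"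
  unfolding sr_def pair_offset_right pair_sroot_sroot
  by (drule gcm_diag[of _ s]) (simp add: offset_def algebra_simps)

lemma sr_offset_snd:
  "gcm A \<Longrightarrow> sr A t (offset s t x c d) = offset s t x c (- pair A (sroot t) x - d - A t s * c)"
  unfolding sr_def pair_offset_right pair_sroot_sroot
  by (drule gcm_diag[of _ t]) (simp add: offset_def algebra_simps)

lemma braid_relation:
  assumes "gcm A" "s \<noteq> t" "A s t * A t s < 4"
  shows "act A (alt s t (braid_length A s t)) = act A (alt t s (braid_length A s t))"
proof
  fix x
  have "act A (alt s t (braid_length A s t)) (offset s t x 0 0)
      = act A (alt t s (braid_length A s t)) (offset s t x 0 0)"
    using gcm_finite_rank2_cases[OF assms] assms(1)
    by (elim insertE emptyE; simp add: braid_length_def alt_numeral sr_offset_fst sr_offset_snd;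
        intro arg_cong2[where f = "offset s t x"]; linarith)
  then show "act A (alt s t (braid_length A s t)) x = act A (alt t s (braid_length A s t)) x"
    unfolding offset_zero .
qed

lemma braid_length_dual_cartan [simp]: "braid_length (dual_cartan A) s t = braid_length A s t"
  by (simp add: braid_length_def dual_cartan_def mult.commute)

lemma act_alt_sroot_nonneg:
  assumes "gcm A" "s \<noteq> t" "4 \<le> A s t * A t s \<or> k < braid_length A s t"
  shows "nonneg_lincomb2 s t (act A (alt s t k) (sroot s))"
  using assms act_alt_sroot_nonneg_infinite act_alt_sroot_nonneg_finite by fastforce

lemma weyl_elem_braid:
  assumes "gcm A" "s \<noteq> t" "A s t * A t s < 4"
  shows "weyl_elem A (alt s t (braid_length A s t)) = weyl_elem A (alt t s (braid_length A s t))"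
proof -
  have "dual_cartan A s t * dual_cartan A t s < 4"
    using assms(3) by (simp add: dual_cartan_def mult.commute)
  then have "act (dual_cartan A) (alt s t (braid_length A s t)) = act (dual_cartan A) (alt t s (braid_length A s t))"
    using braid_relation[OF gcm_dual_cartan[OF assms(1)] assms(2)] by simp
  then show ?thesis
    using braid_relation[OF assms] by (simp add: weyl_elem_def actv_eq_act_dual_cartan)
qed

lemma alt_reduced_lt_braid_length:
  assumes "gcm A" "s \<noteq> t" "A s t * A t s < 4"
    and reduced: "word_length A {s, t} (alt s t k) = k"
    and no_descent: "k \<le> word_length A {s, t} (alt s t k @ [s])"
  shows "k < braid_length A s t"
proof (rule ccontr)
  define m where "m = braid_length A s t"
  assume "\<not> k < braid_length A s t"
  then have "m \<le> k" "0 < m" unfolding m_def braid_length_def by auto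
  have braid: "weyl_elem A (alt s t m) = weyl_elem A (alt t s m)"
    unfolding m_def using weyl_elem_braid[OF assms(1-3)] .
  then consider "k = m" | "m < k" using \<open>m \<le> k\<close> by linarith
  then show False
  proof cases
    case 1
    obtain B where B: "alt t s m = B @ [s]"
      using last_alt[OF \<open>0 < m\<close>, of t s] by (metis alt_eq_Nil_iff append_butlast_last_id \<open>0 < m\<close> neq0_conv)
    have "weyl_elem A (alt s t k @ [s]) = weyl_elem A (B @ [s, s])"
      using 1 braid B weyl_elem_append_cong by fastforce
    also have "\<dots> = weyl_elem A B"
      using weyl_elem_cancel_snoc[OF assms(1)] .
    finally have "word_length A {s, t} (alt s t k @ [s]) = word_length A {s, t} B"
      by (rule word_length_cong)
    also have "\<dots> \<le> length B"
      using word_length_le[of B "{s, t}" A] B set_alt[of t s m] by (auto simp: insert_commute)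
    finally have "k \<le> length B"
      using no_descent by linarith
    then show False using B 1 by (metis length_alt length_append_singleton lessI not_le)
  next
    case 2
    define Q where "Q = take (k - Suc m) (alt s t k)"
    define c where "c = (if even m then t else s)"
    have "alt s t k = Q @ alt s t (Suc m)"
      using drop_alt[of "k - Suc m" s t "Suc m"] 2 unfolding Q_def
      by (metis Suc_leI append_take_drop_id le_add_diff_inverse2)
    then have "weyl_elem A (alt s t k) = weyl_elem A ((Q @ [c]) @ alt s t m)"
      by (simp add: c_def)
    also have "\<dots> = weyl_elem A ((Q @ [c]) @ alt t s m)"
      by (rule weyl_elem_append_cong[OF refl braid])
    also have "\<dots> = weyl_elem A (Q @ [c, c] @ alt t s (m - 1))"
      using \<open>0 < m\<close> by (cases m) (simp_all add: c_def)
    also have "\<dots> = weyl_elem A (Q @ alt t s (m - 1))"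
      using weyl_elem_cancel[OF assms(1)] .
    finally have "k = word_length A {s, t} (Q @ alt t s (m - 1))"
      using reduced word_length_cong by metis
    moreover have "set (Q @ alt t s (m - 1)) \<subseteq> {s, t}"
      using set_alt[of s t k] set_alt[of t s "m - 1"] set_take_subset[of "k - Suc m" "alt s t k"]
      unfolding Q_def by auto
    ultimately have "k \<le> length (Q @ alt t s (m - 1))"
      using word_length_le by metis
    then show False using 2 \<open>0 < m\<close> by (simp add: Q_def)
  qed
qed

lemma dihedral_reduced_word_eq_alt:
  assumes "gcm A" "s \<noteq> t" "set v \<subseteq> {s, t}"
    and no_descent: "word_length A {s, t} v \<le> word_length A {s, t} (v @ [s])"
  obtains k where "weyl_elem A v = weyl_elem A (alt s t k)"
    "4 \<le> A s t * A t s \<or> k < braid_length A s t"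
proof -
  define k where "k = word_length A {s, t} v"
  obtain u where u: "set u \<subseteq> {s, t}" "length u = k" "weyl_elem A u = weyl_elem A v"
    using reduced_word_exists[OF assms(3)] unfolding k_def .
  have no_repeat: "u \<noteq> xs @ [c, c] @ ys" for xs ys c
  proof
    assume "u = xs @ [c, c] @ ys"
    moreover from this have "weyl_elem A (xs @ ys) = weyl_elem A v"
      using u(3) weyl_elem_cancel[OF assms(1)] by metis
    ultimately show False
      using word_length_le[of "xs @ ys" "{s, t}" A] word_length_cong[of A "xs @ ys" v "{s, t}"] u
      unfolding k_def by auto
  qed
  have no_final_s: "u = [] \<or> last u \<noteq> s"
  proof (rule ccontr)
    assume "\<not> (u = [] \<or> last u \<noteq> s)"
    then obtain u' where u': "u = u' @ [s]" by (metis append_butlast_last_id)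
    have "weyl_elem A (v @ [s]) = weyl_elem A (u' @ [s, s])"
      using weyl_elem_append_cong[OF u(3)[symmetric] refl, of "[s]"] u' by simp
    then have "weyl_elem A (v @ [s]) = weyl_elem A u'"
      using weyl_elem_cancel_snoc[OF assms(1)] by simp
    then show False
      using no_descent word_length_le[of u' "{s, t}" A] word_length_cong[of A "v @ [s]" u' "{s, t}"] u u'
      unfolding k_def by auto
  qed
  have alt: "u = alt s t k"
    using alternating_eq_alt[OF u(1) assms(2) no_repeat no_final_s] u(2) by simp
  have "k < braid_length A s t" if "A s t * A t s < 4"
  proof (rule alt_reduced_lt_braid_length[OF assms(1,2) that])
    show "word_length A {s, t} (alt s t k) = k"
      using word_length_cong[OF u(3)] alt k_def by simp
    show "k \<le> word_length A {s, t} (alt s t k @ [s])"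
      using no_descent word_length_cong[OF weyl_elem_append_cong[OF u(3) refl, of "[s]"]] alt k_def
      by simp
  qed
  then show ?thesis using that[of k] alt u(3) by fastforce
qed

lemma dihedral_act_sroot_nonneg:
  assumes "gcm A" "s \<noteq> t" "set v \<subseteq> {s, t}"
    and "word_length A {s, t} v \<le> word_length A {s, t} (v @ [s])"
  shows "nonneg_lincomb2 s t (act A v (sroot s)) \<and> nonneg_lincomb2 s t (actv A v (sroot s))"
proof -
  obtain k where k: "weyl_elem A v = weyl_elem A (alt s t k)"
    "4 \<le> A s t * A t s \<or> k < braid_length A s t"
    using dihedral_reduced_word_eq_alt[OF assms] .
  have "4 \<le> dual_cartan A s t * dual_cartan A t s \<or> k < braid_length (dual_cartan A) s t"
    using k(2) by (simp only: braid_length_dual_cartan) (simp add: dual_cartan_def mult.commute)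
  then have "nonneg_lincomb2 s t (act (dual_cartan A) (alt s t k) (sroot s))"
    using act_alt_sroot_nonneg gcm_dual_cartan assms(1,2) by blast
  moreover have "nonneg_lincomb2 s t (act A (alt s t k) (sroot s))"
    using act_alt_sroot_nonneg assms(1,2) k(2) by blast
  ultimately show ?thesis
    using k(1) by (simp add: weyl_elem_def actv_eq_act_dual_cartan)
qed

section \<open>Positivity of roots\<close>

definition nonneg :: "('i \<Rightarrow> int) \<Rightarrow> bool" where
  "nonneg x \<longleftrightarrow> (\<forall>j. 0 \<le> x j)"

lemma nonneg_sroot: "nonneg (sroot i)"
  by (simp add: nonneg_def sroot_def)

lemma act_lincomb2_nonneg:
  assumes "nonneg_lincomb2 s t x" "nonneg (act A v (sroot s))" "nonneg (act A v (sroot t))"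
  shows "nonneg (act A v x)"
proof -
  obtain p q where "0 \<le> p" "0 \<le> q" "x = lincomb2 s t p q"
    using assms(1) unfolding nonneg_lincomb2_def by blast
  with assms(2,3) show ?thesis
    by (simp add: lincomb2_def act_lincomb nonneg_def)
qed

lemma act_sroot_nonneg_dihedral_step:
  assumes "gcm A" "s \<noteq> t" "set vI \<subseteq> {s, t}"
    and "word_length A {s, t} vI \<le> word_length A {s, t} (vI @ [s])"
    and "\<And>c. c \<in> {s, t} \<Longrightarrow> nonneg (act A v (sroot c)) \<and> nonneg (actv A v (sroot c))"
  shows "nonneg (act A (v @ vI) (sroot s)) \<and> nonneg (actv A (v @ vI) (sroot s))"
  using dihedral_act_sroot_nonneg[OF assms(1-4)] assms(5)[of s] assms(5)[of t]
    act_lincomb2_nonneg[of s t "act A vI (sroot s)" A v]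
    act_lincomb2_nonneg[of s t "act (dual_cartan A) vI (sroot s)" "dual_cartan A" v]
  by (simp add: act_append actv_eq_act_dual_cartan)

lemma minimal_dihedral_factorization:
  assumes "gcm A" "weyl_elem A (w1 @ [t]) = weyl_elem A ws"
    and "word_length A UNIV w1 < word_length A UNIV ws"
  obtains v vI where "set vI \<subseteq> {s, t}" "weyl_elem A (v @ vI) = weyl_elem A ws"
    "word_length A UNIV v + word_length A {s, t} vI \<le> word_length A UNIV ws"
    "word_length A UNIV v < word_length A UNIV ws"
    "\<And>c. c \<in> {s, t} \<Longrightarrow> word_length A UNIV v \<le> word_length A UNIV (v @ [c])"
proof -
  define P where "P = (\<lambda>(v, vI). set vI \<subseteq> {s, t} \<and> weyl_elem A (v @ vI) = weyl_elem A ws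
    \<and> word_length A UNIV v + word_length A {s, t} vI \<le> word_length A UNIV ws)"
  have "word_length A {s, t} [t] \<le> 1"
    using word_length_le[of "[t]" "{s, t}" A] by simp
  then have "P (w1, [t])"
    using assms(2,3) unfolding P_def by auto
  then obtain v vI where P: "P (v, vI)"
    and least: "\<And>v' vI'. P (v', vI') \<Longrightarrow> word_length A UNIV v \<le> word_length A UNIV v'"
    using ex_has_least_nat[of P "(w1, [t])" "\<lambda>(v, vI). word_length A UNIV v"] by fastforce
  have no_descent: "word_length A UNIV v \<le> word_length A UNIV (v @ [c])" if "c \<in> {s, t}" for c
  proof (rule ccontr)
    assume shorter: "\<not> ?thesis"
    have "weyl_elem A ((v @ [c]) @ c # vI) = weyl_elem A (v @ vI)"
      using weyl_elem_cancel[OF assms(1), of v c vI] by simp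
    moreover have "word_length A {s, t} (c # vI) \<le> word_length A {s, t} vI + 1"
      using word_length_Cons[OF that] P unfolding P_def by simp
    ultimately have "P (v @ [c], c # vI)"
      using P that shorter unfolding P_def by auto
    then show False using least shorter by fastforce
  qed
  moreover have "word_length A UNIV v < word_length A UNIV ws"
    using least[OF \<open>P (w1, [t])\<close>] assms(3) by simp
  ultimately show ?thesis
    using that P unfolding P_def by blast
qed

theorem act_sroot_nonneg_if_no_descent:
  assumes "gcm A" "word_length A UNIV ws \<le> word_length A UNIV (ws @ [s])"
  shows "nonneg (act A ws (sroot s)) \<and> nonneg (actv A ws (sroot s))"
  using assms(2)
proof (induction "word_length A UNIV ws" arbitrary: ws s rule: less_induct)
  case less
  obtain w0 where w0: "length w0 = word_length A UNIV ws" "weyl_elem A w0 = weyl_elem A ws"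
    using reduced_word_exists[of ws UNIV A] by blast
  show ?case
  proof (cases w0 rule: rev_cases)
    case Nil
    then show ?thesis
      using weyl_elem_eq_act[OF w0(2)] by (simp add: nonneg_sroot)
  next
    case (snoc w1 t)
    have shorter: "word_length A UNIV w1 < word_length A UNIV ws"
      using word_length_le[of w1 UNIV A] w0(1) snoc by simp
    have "t \<noteq> s"
    proof
      assume "t = s"
      then have "weyl_elem A (ws @ [s]) = weyl_elem A (w1 @ [s, s])"
        using weyl_elem_append_cong[OF w0(2)[symmetric] refl, of "[s]"] snoc by simp
      then have "word_length A UNIV (ws @ [s]) = word_length A UNIV w1"
        using weyl_elem_cancel_snoc[OF assms(1)] word_length_cong by metis
      then show False using less.prems shorter by simp
    qed
    obtain v vI where vI: "set vI \<subseteq> {s, t}" "weyl_elem A (v @ vI) = weyl_elem A ws"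
      "word_length A UNIV v + word_length A {s, t} vI \<le> word_length A UNIV ws"
      and shorter_v: "word_length A UNIV v < word_length A UNIV ws"
      and no_descent_v: "\<And>c. c \<in> {s, t} \<Longrightarrow> word_length A UNIV v \<le> word_length A UNIV (v @ [c])"
      using minimal_dihedral_factorization[OF assms(1) _ shorter] w0(2) snoc by metis
    have "word_length A {s, t} vI \<le> word_length A {s, t} (vI @ [s])"
    proof (rule ccontr)
      assume descent: "\<not> ?thesis"
      have "word_length A UNIV (ws @ [s]) = word_length A UNIV (v @ vI @ [s])"
        using weyl_elem_append_cong[OF vI(2)[symmetric] refl, of "[s]"] word_length_cong by simp
      also have "\<dots> \<le> word_length A UNIV v + word_length A UNIV (vI @ [s])"
        using word_length_append[of v UNIV "vI @ [s]" A] by simp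
      also have "\<dots> \<le> word_length A UNIV v + word_length A {s, t} (vI @ [s])"
        using word_length_mono[of "vI @ [s]" "{s, t}" UNIV A] vI(1) by simp
      finally show False
        using descent vI(3) less.prems by simp
    qed
    then have "nonneg (act A (v @ vI) (sroot s)) \<and> nonneg (actv A (v @ vI) (sroot s))"
      using act_sroot_nonneg_dihedral_step[OF assms(1) \<open>t \<noteq> s\<close>[symmetric] vI(1)]
        less.hyps[OF shorter_v no_descent_v] by blast
    then show ?thesis
      using weyl_elem_eq_act[OF vI(2)] by simp
  qed
qed

lemma act_sroot_sign:
  assumes "gcm A"
  shows "(nonneg (act A ws (sroot i)) \<and> nonneg (actv A ws (sroot i)))
    \<or> (nonneg (\<lambda>j. - act A ws (sroot i) j) \<and> nonneg (\<lambda>j. - actv A ws (sroot i) j))"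
proof (cases "word_length A UNIV ws \<le> word_length A UNIV (ws @ [i])")
  case True
  then show ?thesis using act_sroot_nonneg_if_no_descent[OF assms] by blast
next
  case False
  have "word_length A UNIV ((ws @ [i]) @ [i]) = word_length A UNIV ws"
    using word_length_cong[OF weyl_elem_cancel_snoc[OF assms]] by simp
  with False have "word_length A UNIV (ws @ [i]) \<le> word_length A UNIV ((ws @ [i]) @ [i])"
    by linarith
  then have "nonneg (act A (ws @ [i]) (sroot i)) \<and> nonneg (actv A (ws @ [i]) (sroot i))"
    by (rule act_sroot_nonneg_if_no_descent[OF assms])
  then show ?thesis
    by (simp add: act_snoc_sroot[OF assms] actv_snoc_sroot[OF assms])
qed

lemma act_sroot_nonzero:
  assumes "gcm A" shows "act A ws (sroot i) \<noteq> (\<lambda>_. 0)"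
proof
  assume "act A ws (sroot i) = (\<lambda>_. 0)"
  then have "sroot i = (\<lambda>_. 0)"
    using act_rev_act[OF assms, of ws "sroot i"] act_zero[of A "rev ws"] by simp
  then show False
    by (metis sroot_def zero_neq_one)
qed

lemma nonneg_antisym: "nonneg x \<Longrightarrow> nonneg (\<lambda>j. - x j) \<Longrightarrow> x = (\<lambda>_. 0)"
  by (auto simp: nonneg_def fun_eq_iff intro: order_antisym)

lemma nonneg_actv_sroot_iff:
  "gcm A \<Longrightarrow> nonneg (actv A ws (sroot i)) \<longleftrightarrow> nonneg (act A ws (sroot i))"
  using act_sroot_sign[of A ws i] nonneg_antisym act_sroot_nonzero[of A ws i]
    act_sroot_nonzero[OF gcm_dual_cartan, of A ws i]
  by (auto simp: actv_eq_act_dual_cartan)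

lemma nonpos_actv_sroot_iff:
  "gcm A \<Longrightarrow> nonneg (\<lambda>j. - actv A ws (sroot i) j) \<longleftrightarrow> nonneg (\<lambda>j. - act A ws (sroot i) j)"
  using act_sroot_sign[of A ws i] nonneg_antisym act_sroot_nonzero[of A ws i]
    act_sroot_nonzero[OF gcm_dual_cartan, of A ws i]
  by (auto simp: actv_eq_act_dual_cartan)

lemma act_sroot_supported_eq_sroot:
  assumes "gcm A" "nonneg (act A u (sroot k))" "\<And>j. j \<noteq> i \<Longrightarrow> act A u (sroot k) j = 0"
  shows "act A u (sroot k) = sroot i"
proof -
  define x where "x = act A u (sroot k)"
  have x: "x = (\<lambda>j. x i * sroot i j + 0 * sroot i j)"
    using assms(3) unfolding x_def sroot_def by (auto simp: fun_eq_iff)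
  have "sroot k = act A (rev u) x"
    unfolding x_def act_rev_act[OF assms(1)] ..
  also have "\<dots> = (\<lambda>j. x i * act A (rev u) (sroot i) j + 0 * act A (rev u) (sroot i) j)"
    by (subst x) (rule act_lincomb)
  finally have "x i * act A (rev u) (sroot i) k = 1"
    by (metis (mono_tags, lifting) add.right_neutral mult_zero_left sroot_def)
  with assms(2) have "x i = 1"
    unfolding x_def nonneg_def by (metis pos_zmult_eq_1_iff zero_less_mult_iff zero_less_one order_le_less)
  with x show ?thesis unfolding x_def by simp
qed

lemma actv_sroot_eq_sroot:
  assumes "gcm A" "act A u (sroot i) = sroot j"
  shows "actv A u (sroot i) = sroot j"
proof -
  define y where "y = actv A u (sroot i)"
  have "nonneg y"
    unfolding y_def nonneg_actv_sroot_iff[OF assms(1)] assms(2) by (rule nonneg_sroot)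
  have "act A (j # u) (sroot i) = (\<lambda>k. - sroot j k)"
    using assms sr_sroot_self by simp
  then have "nonneg (\<lambda>k. - srv A j y k)"
    using nonpos_actv_sroot_iff[OF assms(1), of "j # u" i] nonneg_sroot unfolding y_def by simp
  moreover have "srv A j y k = y k" if "k \<noteq> j" for k
    using sr_apply_other[OF that] by (simp add: srv_eq_sr_dual_cartan)
  ultimately have "y k = 0" if "k \<noteq> j" for k
    using \<open>nonneg y\<close> that unfolding nonneg_def by (metis neg_0_le_iff_le order_antisym)
  then show ?thesis
    using act_sroot_supported_eq_sroot[OF gcm_dual_cartan[OF assms(1)]] \<open>nonneg y\<close>
    unfolding y_def actv_eq_act_dual_cartan by blast
qed

lemma actv_sroot_eq_if_act_sroot_eq:
  assumes "gcm A" "act A u (sroot i) = act A u' (sroot j)"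
  shows "actv A u (sroot i) = actv A u' (sroot j)"
proof -
  have "act A (rev u' @ u) (sroot i) = sroot j"
    using assms act_append act_rev_act by metis
  then have "actv A (rev u' @ u) (sroot i) = sroot j"
    by (rule actv_sroot_eq_sroot[OF assms(1)])
  then have "actv A u' (actv A (rev u') (actv A u (sroot i))) = actv A u' (sroot j)"
    by (simp add: actv_append)
  then show ?thesis
    using act_act_rev[OF gcm_dual_cartan[OF assms(1)]] by (simp add: actv_eq_act_dual_cartan)
qed

section \<open>Roots, coroots and reflections\<close>

lemma act_sroot_in_roots: "act A ws (sroot i) \<in> roots A"
  unfolding roots_def by blast

lemma rootsE:
  assumes "b \<in> roots A"
  obtains ws i where "b = act A ws (sroot i)"
  using assms unfolding roots_def by blast

lemma act_in_roots: "b \<in> roots A \<Longrightarrow> act A w b \<in> roots A"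
  by (erule rootsE) (simp add: act_append[symmetric] act_sroot_in_roots)

lemma sr_in_roots: "b \<in> roots A \<Longrightarrow> sr A i b \<in> roots A"
  using act_in_roots[of b A "[i]"] by simp

lemma sroot_in_pos_roots: "sroot i \<in> pos_roots A"
proof -
  have "sroot i \<in> roots A"
    using act_sroot_in_roots[of A "[]" i] by simp
  then show ?thesis unfolding pos_roots_def sroot_def by simp
qed

lemma uminus_in_roots:
  assumes "gcm A" "b \<in> roots A" shows "(\<lambda>j. - b j) \<in> roots A"
proof -
  obtain ws i where "b = act A ws (sroot i)"
    using assms(2) by (rule rootsE)
  then have "(\<lambda>j. - b j) = act A (ws @ [i]) (sroot i)"
    by (simp add: act_snoc_sroot[OF assms(1)])
  then show ?thesis by (simp add: act_sroot_in_roots)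
qed

lemma root_sign:
  assumes "gcm A" "b \<in> roots A" shows "nonneg b \<or> nonneg (\<lambda>j. - b j)"
  using assms(2) by (rule rootsE) (use act_sroot_sign[OF assms(1)] in blast)

lemma root_in_pos_roots:
  assumes "gcm A" "b \<in> roots A" "0 < b j" shows "b \<in> pos_roots A"
proof -
  have "\<not> nonneg (\<lambda>j. - b j)"
    using assms(3) unfolding nonneg_def by (metis neg_0_le_iff_le not_le)
  then show ?thesis
    using root_sign[OF assms(1,2)] assms(2) unfolding pos_roots_def nonneg_def by blast
qed

lemma root_in_neg_roots:
  assumes "gcm A" "b \<in> roots A" "b j < 0" shows "b \<in> neg_roots A"
proof -
  have "\<not> nonneg b"
    using assms(3) unfolding nonneg_def by (metis not_le)
  then show ?thesis
    using root_sign[OF assms(1,2)] assms(2) unfolding neg_roots_def nonneg_def by auto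
qed

lemma pos_root_supported_eq_sroot:
  assumes "gcm A" "b \<in> pos_roots A" "\<And>j. j \<noteq> i \<Longrightarrow> b j = 0"
  shows "b = sroot i"
proof -
  obtain ws k where b: "b = act A ws (sroot k)"
    using assms(2) unfolding pos_roots_def by (blast elim: rootsE)
  have "nonneg b"
    using assms(2) unfolding pos_roots_def nonneg_def by blast
  then show ?thesis
    using act_sroot_supported_eq_sroot[OF assms(1)] assms(3) unfolding b by blast
qed

lemma coroot_act_sroot:
  assumes "gcm A" shows "coroot A (act A ws (sroot i)) = actv A ws (sroot i)"
proof -
  have "\<exists>y ws' i'. act A ws (sroot i) = act A ws' (sroot i') \<and> y = actv A ws' (sroot i')"
    by (intro exI conjI) (rule refl)+
  then have "\<exists>ws' i'. act A ws (sroot i) = act A ws' (sroot i')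
      \<and> coroot A (act A ws (sroot i)) = actv A ws' (sroot i')"
    unfolding coroot_def by (rule someI_ex)
  then obtain ws' i' where "act A ws' (sroot i') = act A ws (sroot i)"
    "coroot A (act A ws (sroot i)) = actv A ws' (sroot i')"
    by (elim exE conjE) (rule that, rule sym)
  then show ?thesis
    using actv_sroot_eq_if_act_sroot_eq[OF assms] by metis
qed

lemma coroot_act:
  assumes "gcm A" "b \<in> roots A" shows "coroot A (act A w b) = actv A w (coroot A b)"
  using assms(2) by (rule rootsE)
    (simp add: act_append[symmetric] actv_append coroot_act_sroot[OF assms(1)])

lemma coroot_sr:
  assumes "gcm A" "b \<in> roots A" shows "coroot A (sr A i b) = srv A i (coroot A b)"
  using coroot_act[OF assms, of "[i]"] by simp

lemma pair_coroot_root: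
  assumes "gcm A" "b \<in> roots A" shows "pair A (coroot A b) b = 2"
  using assms(2) by (rule rootsE)
    (simp add: coroot_act_sroot[OF assms(1)] pair_actv_left act_rev_act[OF assms(1)]
      pair_sroot_sroot gcm_diag[OF assms(1)])

lemma act_conj_sr:
  assumes "gcm A"
  shows "act A ws (sr A i (act A (rev ws) x))
    = (\<lambda>j. x j - pair A (actv A ws (sroot i)) x * act A ws (sroot i) j)"
proof -
  define z where "z = act A (rev ws) x"
  have "sr A i z = (\<lambda>j. 1 * z j + (- pair A (sroot i) z) * sroot i j)"
    unfolding sr_def by simp
  then have "act A ws (sr A i z) = (\<lambda>j. 1 * act A ws z j + (- pair A (sroot i) z) * act A ws (sroot i) j)"
    by (simp only: act_lincomb)
  moreover have "act A ws z = x"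
    unfolding z_def by (rule act_act_rev[OF assms])
  moreover have "pair A (sroot i) z = pair A (actv A ws (sroot i)) x"
    unfolding z_def pair_actv_left ..
  ultimately show ?thesis
    unfolding z_def by simp
qed

lemma refl_eq:
  assumes "gcm A" "b \<in> roots A"
  shows "refl A b x = (\<lambda>j. x j - pair A (coroot A b) x * b j)"
proof -
  have "\<exists>f ws i. b = act A ws (sroot i) \<and> f = (\<lambda>x. act A ws (sr A i (act A (rev ws) x)))"
    using assms(2) by (blast elim: rootsE)
  then have "\<exists>ws i. b = act A ws (sroot i) \<and> refl A b = (\<lambda>x. act A ws (sr A i (act A (rev ws) x)))"
    unfolding refl_def by (rule someI_ex)
  then obtain ws i where "b = act A ws (sroot i)"
    "refl A b = (\<lambda>x. act A ws (sr A i (act A (rev ws) x)))"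
    by blast
  then show ?thesis
    by (simp add: act_conj_sr[OF assms(1)] coroot_act_sroot[OF assms(1)])
qed

lemma refl_in_roots:
  assumes "gcm A" "b \<in> roots A" "x \<in> roots A"
  shows "refl A b x \<in> roots A"
proof -
  obtain ws i where b: "b = act A ws (sroot i)"
    using assms(2) by (rule rootsE)
  have "refl A b x = (\<lambda>j. x j - pair A (coroot A b) x * b j)"
    by (rule refl_eq[OF assms(1,2)])
  also have "\<dots> = act A (ws @ i # rev ws) x"
    unfolding b by (simp add: act_append act_conj_sr[OF assms(1)] coroot_act_sroot[OF assms(1)])
  finally show ?thesis
    using act_in_roots[OF assms(3)] by simp
qed

lemma pos_root_coord_pos:
  assumes "gcm A" "b \<in> pos_roots A" "b \<noteq> sroot i"
  obtains j where "j \<noteq> i" "0 < b j"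
proof -
  obtain j where "j \<noteq> i" "b j \<noteq> 0"
    using pos_root_supported_eq_sroot[OF assms(1,2)] assms(3) by blast
  moreover have "0 \<le> b j"
    using assms(2) unfolding pos_roots_def by blast
  ultimately show ?thesis using that by simp
qed

lemma sr_in_pos_roots:
  assumes "gcm A" "b \<in> pos_roots A" "b \<noteq> sroot i"
  shows "sr A i b \<in> pos_roots A"
proof -
  obtain j where "j \<noteq> i" "0 < b j"
    using pos_root_coord_pos[OF assms] .
  moreover have "sr A i b \<in> roots A"
    using assms(2) sr_in_roots unfolding pos_roots_def by blast
  ultimately show ?thesis
    using root_in_pos_roots[OF assms(1)] sr_apply_other by metis
qed

lemma refl_sr:
  assumes "gcm A" "g \<in> roots A"
  shows "refl A (sr A i g) x = sr A i (refl A g (sr A i x))"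
proof -
  have "refl A g (sr A i x) = (\<lambda>j. 1 * sr A i x j + (- pair A (coroot A g) (sr A i x)) * g j)"
    using refl_eq[OF assms] by simp
  then have "sr A i (refl A g (sr A i x))
      = (\<lambda>j. 1 * sr A i (sr A i x) j + (- pair A (coroot A g) (sr A i x)) * sr A i g j)"
    by (simp only: sr_lincomb)
  then have "sr A i (refl A g (sr A i x)) = (\<lambda>j. x j - pair A (coroot A g) (sr A i x) * sr A i g j)"
    by (simp add: sr_sr[OF assms(1)])
  then show ?thesis
    by (simp add: refl_eq[OF assms(1) sr_in_roots[OF assms(2)]] coroot_sr[OF assms] pair_srv_left)
qed

section \<open>Quantum roots\<close>

lemma pair_coroot_sroot_ge_neg_one:
  assumes "gcm A" "b \<in> pos_roots A" "b \<noteq> sroot i" "quantum A (sr A i b)"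
  shows "-1 \<le> pair A (coroot A b) (sroot i)"
proof (rule ccontr)
  define c where "c = pair A (coroot A b) (sroot i)"
  define r where "r = sr A i b"
  assume "\<not> -1 \<le> pair A (coroot A b) (sroot i)"
  then have "c < -1" unfolding c_def by simp
  have b: "b \<in> roots A" using assms(2) unfolding pos_roots_def by blast
  obtain j where j: "j \<noteq> i" "0 < b j"
    using pos_root_coord_pos[OF assms(1-3)] .
  have r: "r \<in> roots A" "r j = b j"
    unfolding r_def using sr_in_roots[OF b] sr_apply_other[OF j(1)] by auto
  have rv: "pair A (coroot A r) (sroot i) = - c"
    unfolding r_def c_def coroot_sr[OF assms(1) b] pair_srv_left sr_sroot_self[OF assms(1)]
      pair_uminus_right ..
  have "refl A r (sroot i) j = c * b j"
    using j(1) r(2) by (simp add: refl_eq[OF assms(1) r(1)] rv) (simp add: sroot_def)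
  also have "\<dots> < 0"
    using \<open>c < -1\<close> j(2) by (simp add: mult_neg_pos)
  finally have "refl A r (sroot i) \<in> neg_roots A"
    using root_in_neg_roots[OF assms(1) refl_in_roots[OF assms(1) r(1) act_sroot_in_roots[of A "[]"]]]
    by simp
  then have "sroot i \<in> Inv A (refl A r) - {r}"
    using sroot_in_pos_roots r(2) j unfolding Inv_def by (auto simp: sroot_def)
  then have "pair A (coroot A r) (sroot i) = 1"
    using assms(4) unfolding quantum_def r_def by blast
  then show False using rv \<open>c < -1\<close> by simp
qed

lemma pair_coroot_sroot_eq_one_if_inversion:
  assumes "gcm A" "d \<in> pos_roots A" "refl A d (sroot i) \<in> neg_roots A"
    and "pair A (coroot A d) (sroot i) \<le> 1"
  shows "pair A (coroot A d) (sroot i) = 1"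
proof -
  define m where "m = pair A (coroot A d) (sroot i)"
  have "refl A d (sroot i) i = 1 - m * d i"
    unfolding m_def using assms(2) by (simp add: pos_roots_def refl_eq[OF assms(1)]) (simp add: sroot_def)
  moreover have "refl A d (sroot i) i \<le> 0" "0 \<le> d i"
    using assms(2,3) unfolding pos_roots_def neg_roots_def by auto
  ultimately have "0 < m"
    by (smt (verit) mult_nonpos_nonneg)
  then show ?thesis using assms(4) unfolding m_def by simp
qed

lemma pair_coroot_eq_one_if_refl_eq_neg_sroot:
  assumes "gcm A" "d \<in> pos_roots A" "x \<in> pos_roots A" "refl A d x = (\<lambda>j. - sroot i j)"
    and "pair A (coroot A d) (sroot i) \<le> 1"
  shows "pair A (coroot A d) x = 1"
proof -
  define m where "m = pair A (coroot A d) x"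
  have d: "d \<in> roots A" using assms(2) unfolding pos_roots_def by blast
  have x: "x = (\<lambda>j. m * d j + (-1) * sroot i j)"
    using assms(4) unfolding refl_eq[OF assms(1) d] m_def by (simp add: fun_eq_iff algebra_simps)
  have "pair A (coroot A d) x = m * pair A (coroot A d) d + (-1) * pair A (coroot A d) (sroot i)"
    by (subst x) (rule pair_lincomb_right)
  then have m: "m = pair A (coroot A d) (sroot i)"
    using pair_coroot_root[OF assms(1) d] unfolding m_def by simp
  have "0 \<le> x i"
    using assms(3) unfolding pos_roots_def by blast
  then have "0 \<le> m * d i - 1"
    by (subst (asm) x) (simp add: sroot_def)
  moreover have "0 \<le> d i" using assms(2) unfolding pos_roots_def by blast
  ultimately have "0 < m"
    by (smt (verit) mult_nonpos_nonneg)
  then show ?thesis using assms(5) m unfolding m_def by simp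
qed

lemma pair_coroot_sr_eq_one_if_quantum:
  assumes "gcm A" "quantum A g" "x \<in> pos_roots A" "x \<noteq> sroot i" "x \<noteq> sr A i g"
    and "j \<noteq> i" "refl A (sr A i g) x j < 0"
  shows "pair A (coroot A (sr A i g)) x = 1"
proof -
  have g: "g \<in> roots A" using assms(2) unfolding quantum_def pos_roots_def by blast
  have x': "sr A i x \<in> pos_roots A"
    using sr_in_pos_roots[OF assms(1,3,4)] .
  have "refl A g (sr A i x) j < 0"
    using assms(6,7) by (simp add: refl_sr[OF assms(1) g] sr_apply_other)
  then have "refl A g (sr A i x) \<in> neg_roots A"
    using root_in_neg_roots[OF assms(1) refl_in_roots[OF assms(1) g]] x'
    unfolding pos_roots_def by blast
  moreover have "sr A i x \<noteq> g"
    using assms(5) sr_sr[OF assms(1), of i x] by auto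
  ultimately have "sr A i x \<in> Inv A (refl A g) - {g}"
    using x' unfolding Inv_def by blast
  then have "pair A (coroot A g) (sr A i x) = 1"
    using assms(2) unfolding quantum_def by blast
  then show ?thesis
    by (simp add: coroot_sr[OF assms(1) g] pair_srv_left)
qed

lemma quantum_sr:
  assumes "gcm A" "quantum A g" "g \<noteq> sroot i" "-1 \<le> pair A (coroot A g) (sroot i)"
  shows "quantum A (sr A i g)"
proof -
  define d where "d = sr A i g"
  have g: "g \<in> pos_roots A" using assms(2) unfolding quantum_def by blast
  then have "g \<in> roots A" unfolding pos_roots_def by blast
  have d: "d \<in> pos_roots A"
    unfolding d_def using sr_in_pos_roots[OF assms(1) g assms(3)] .
  have "pair A (coroot A d) (sroot i) = - pair A (coroot A g) (sroot i)"
    unfolding d_def coroot_sr[OF assms(1) \<open>g \<in> roots A\<close>] pair_srv_left sr_sroot_self[OF assms(1)]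
      pair_uminus_right ..
  with assms(4) have dv: "pair A (coroot A d) (sroot i) \<le> 1" by simp
  have "pair A (coroot A d) x = 1" if x: "x \<in> Inv A (refl A d) - {d}" for x
  proof -
    have x_pos: "x \<in> pos_roots A" and h: "refl A d x \<in> neg_roots A" and "x \<noteq> d"
      using x unfolding Inv_def by auto
    consider "x = sroot i" | "x \<noteq> sroot i" "\<exists>j. j \<noteq> i \<and> refl A d x j < 0"
      | "x \<noteq> sroot i" "\<forall>j. j \<noteq> i \<longrightarrow> 0 \<le> refl A d x j" by fastforce
    then show ?thesis
    proof cases
      case 1
      then show ?thesis using pair_coroot_sroot_eq_one_if_inversion[OF assms(1) d _ dv] h by simp
    next
      case 2
      then show ?thesis
        using pair_coroot_sr_eq_one_if_quantum[OF assms(1,2) x_pos] \<open>x \<noteq> d\<close> unfolding d_def by blast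
    next
      case 3
      have "refl A d x j = 0" if "j \<noteq> i" for j
        using 3(2) that h unfolding neg_roots_def by (simp add: order_antisym)
      moreover have "(\<lambda>j. - refl A d x j) \<in> pos_roots A"
        using uminus_in_roots[OF assms(1)] h unfolding neg_roots_def pos_roots_def by simp
      ultimately have "(\<lambda>j. - refl A d x j) = sroot i"
        using pos_root_supported_eq_sroot[OF assms(1)] by simp
      then have "refl A d x = (\<lambda>j. - sroot i j)"
        by (metis minus_minus)
      then show ?thesis
        using pair_coroot_eq_one_if_refl_eq_neg_sroot[OF assms(1) d x_pos _ dv] by simp
    qed
  qed
  then show ?thesis
    using d unfolding quantum_def d_def by blast
qed

lemma srv_eq_if_pair_sroot_eq:
  "pair A y (sroot i) = pair A z (sroot i) \<Longrightarrow> srv A i y = (\<lambda>j. y j + srv A i z j - z j)"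
  by (simp add: srv_def fun_eq_iff)

theorem lemma2p28:
  fixes A :: "'i::finite \<Rightarrow> 'i \<Rightarrow> int" and b :: "'i \<Rightarrow> int" and i :: 'i and w :: "'i list"
  assumes "gcm A"
    and "b \<in> pos_roots A"
    and "act A (rev w) (sroot i) = sroot i"
    and "quantum A b" and "quantum A (sr A i b)" and "quantum A (act A w b)"
  shows "quantum A (sr A i (act A w b))
         \<and> srv A i (actv A w (coroot A b))
             = (\<lambda>j. actv A w (coroot A b) j + srv A i (coroot A b) j - coroot A b j)"
proof -
  have b: "b \<in> roots A" using assms(2) unfolding pos_roots_def by blast
  have "b \<noteq> sroot i"
  proof
    assume "b = sroot i"
    then have "sr A i b i = -1" by (simp add: sr_sroot_self[OF assms(1)]) (simp add: sroot_def)
    moreover have "0 \<le> sr A i b i"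
      using assms(5) unfolding quantum_def pos_roots_def by blast
    ultimately show False by simp
  qed
  have "act A w b \<noteq> sroot i"
  proof
    assume "act A w b = sroot i"
    then have "b = act A (rev w) (sroot i)"
      using act_rev_act[OF assms(1), of w b] by simp
    then show False using assms(3) \<open>b \<noteq> sroot i\<close> by simp
  qed
  have pair_eq: "pair A (actv A w (coroot A b)) (sroot i) = pair A (coroot A b) (sroot i)"
    by (simp add: pair_actv_left assms(3))
  have "-1 \<le> pair A (coroot A (act A w b)) (sroot i)"
    using pair_coroot_sroot_ge_neg_one[OF assms(1,2) \<open>b \<noteq> sroot i\<close> assms(5)]
    by (simp add: coroot_act[OF assms(1) b] pair_eq)
  then show ?thesis
    using quantum_sr[OF assms(1,6) \<open>act A w b \<noteq> sroot i\<close>] srv_eq_if_pair_sroot_eq[OF pair_eq] by blast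
qed

end
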